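(* Let $G$ be a connected interval graph with a fixed interval representation in which all right endpoints are distinct, and let $V_2=\{w_1,\dots,w_{|V_2|}\}$ and $C_1,\dots,C_{|V_2|}$ be as defined in the context. Then for every dominating set $D$ of $G$ and every $i\in\{1,\dots,|V_2|\}$, $|D\cap C_i|\ge1$. Consequently (since $V_2\cap C_i=\{w_i\}$ and the $C_i$ partition $V(G)$), $V_2$ is a minimum dominating set of $G$.
   Context: $G$ is given by closed intervals $I_v=[l(v),r(v)]$, $v\in V(G)$, with $uv\in E(G)$ iff $I_u\cap I_v\ne\emptyset$. Labeling procedure, repeated until all vertices are labeled: (1) pick the unlabeled vertex $v_i$ with minimum $r$-value among unlabeled vertices and give it label 1; (2) let $v_j$ be the vertex of $N[v_i]$ with maximum $r$-value (possibly already labeled, possibly $v_j=v_i$) and (re)label $v_j$ with label 2; (3) give label 3 to every still unlabeled vertex of $N(v_j)$. $V_k$ is the set of vertices whose final label is $k$. Order $V_2$ as $w_1,\dots,w_{|V_2|}$ with $r(w_1)<\dots<r(w_{|V_2|})$. Define $C_1=\{v: r(v)\le r(w_1)\}$, $C_i=\{v: r(w_{i-1})<r(v)\le r(w_i)\}$ for $2\le i\le |V_2|-1$, and $C_{|V_2|}=\{v: r(w_{|V_2|-1})<r(v)\}$ (if $|V_2|=1$, $C_1=V(G)$). $N[v]$, $N(v)$ are closed and open neighbourhoods. A set $D$ is a dominating set if every vertex is in $D$ or adjacent to a vertex of $D$. *)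

theory Defs
  imports Complex_Main
begin

text \<open>Interval graph on a finite vertex set V, vertex v has interval [l v, r v].\<close>

definition adj :: "('a \<Rightarrow> real) \<Rightarrow> ('a \<Rightarrow> real) \<Rightarrow> 'a \<Rightarrow> 'a \<Rightarrow> bool" where
  "adj l r u v \<longleftrightarrow> u \<noteq> v \<and> l u \<le> r v \<and> l v \<le> r u"

definition closed_nbhd :: "'a set \<Rightarrow> ('a \<Rightarrow> real) \<Rightarrow> ('a \<Rightarrow> real) \<Rightarrow> 'a \<Rightarrow> 'a set" where
  "closed_nbhd V l r v = {u \<in> V. u = v \<or> adj l r u v}"

definition open_nbhd :: "'a set \<Rightarrow> ('a \<Rightarrow> real) \<Rightarrow> ('a \<Rightarrow> real) \<Rightarrow> 'a \<Rightarrow> 'a set" where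
  "open_nbhd V l r v = {u \<in> V. adj l r u v}"

definition connected_graph :: "'a set \<Rightarrow> ('a \<Rightarrow> real) \<Rightarrow> ('a \<Rightarrow> real) \<Rightarrow> bool" where
  "connected_graph V l r \<longleftrightarrow> V \<noteq> {} \<and>
     (\<forall>u\<in>V. \<forall>v\<in>V. (\<lambda>x y. x \<in> V \<and> y \<in> V \<and> adj l r x y)\<^sup>*\<^sup>* u v)"

definition dominating :: "'a set \<Rightarrow> ('a \<Rightarrow> real) \<Rightarrow> ('a \<Rightarrow> real) \<Rightarrow> 'a set \<Rightarrow> bool" where
  "dominating V l r D \<longleftrightarrow> D \<subseteq> V \<and> (\<forall>v\<in>V. v \<in> D \<or> (\<exists>u\<in>D. adj l r u v))"

definition min_dominating :: "'a set \<Rightarrow> ('a \<Rightarrow> real) \<Rightarrow> ('a \<Rightarrow> real) \<Rightarrow> 'a set \<Rightarrow> bool" where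
  "min_dominating V l r D \<longleftrightarrow> dominating V l r D \<and>
     (\<forall>D'. dominating V l r D' \<longrightarrow> card D \<le> card D')"

text \<open>One round of the labeling procedure. Labels: 0 = unlabeled, 1, 2, 3.\<close>
definition label_step :: "'a set \<Rightarrow> ('a \<Rightarrow> real) \<Rightarrow> ('a \<Rightarrow> real) \<Rightarrow> ('a \<Rightarrow> nat) \<Rightarrow> ('a \<Rightarrow> nat)" where
  "label_step V l r lab =
    (let U = {v \<in> V. lab v = 0} in
     if U = {} then lab else
     let vi = (THE v. v \<in> U \<and> (\<forall>u\<in>U. r v \<le> r u));
         lab1 = lab(vi := 1);
         vj = (THE v. v \<in> closed_nbhd V l r vi \<and> (\<forall>u\<in>closed_nbhd V l r vi. r u \<le> r v));
         lab2 = lab1(vj := 2)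
     in (\<lambda>u. if u \<in> open_nbhd V l r vj \<and> lab2 u = 0 then 3 else lab2 u))"

text \<open>Final labeling: each round labels at least one new vertex, so card V rounds suffice
  (further rounds leave a complete labeling unchanged).\<close>
definition final_label :: "'a set \<Rightarrow> ('a \<Rightarrow> real) \<Rightarrow> ('a \<Rightarrow> real) \<Rightarrow> 'a \<Rightarrow> nat" where
  "final_label V l r = (label_step V l r ^^ card V) (\<lambda>_. 0)"

definition V2 :: "'a set \<Rightarrow> ('a \<Rightarrow> real) \<Rightarrow> ('a \<Rightarrow> real) \<Rightarrow> 'a set" where
  "V2 V l r = {v \<in> V. final_label V l r v = 2}"

text \<open>C-sets, 0-indexed: C V r ws i corresponds to the paper's C_{i+1}, where ws lists V2 by
  increasing r.\<close>
definition Cset :: "'a set \<Rightarrow> ('a \<Rightarrow> real) \<Rightarrow> 'a list \<Rightarrow> nat \<Rightarrow> 'a set" where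
  "Cset V r ws i =
    (if length ws = 1 then V
     else if i = 0 then {v \<in> V. r v \<le> r (ws ! 0)}
     else if i = length ws - 1 then {v \<in> V. r (ws ! (i - 1)) < r v}
     else {v \<in> V. r (ws ! (i - 1)) < r v \<and> r v \<le> r (ws ! i)})"

end

theory Submission
  imports Defs
begin

text \<open>
  Each round of the labeling starts at the unlabeled vertex \<open>a\<close> with the leftmost right
  endpoint and labels 2 the vertex \<open>b\<close> of \<open>N[a]\<close> reaching furthest to the right. All unlabeled
  vertices lie strictly to the right of all earlier 2-vertices, so every interval of \<open>N[a]\<close>
  ends after the previous 2-vertex and no later than \<open>b\<close>: \<open>N[a]\<close> is contained in the class
  \<open>C\<^sub>i\<close> of \<open>b = w\<^sub>i\<close>. A dominating set meets \<open>N[a]\<close>, hence every \<open>C\<^sub>i\<close>, and as the \<open>C\<^sub>i\<close>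
  are disjoint it has at least \<open>|V\<^sub>2|\<close> elements. Conversely \<open>V\<^sub>2\<close> dominates, because every
  labeled vertex is a 2-vertex or a neighbour of one.
\<close>

lemma ex1_arg_min_inj_on:
  fixes f :: "'a \<Rightarrow> 'b::linorder"
  assumes "finite S" "S \<noteq> {}" "inj_on f S"
  shows "\<exists>!v. v \<in> S \<and> (\<forall>u\<in>S. f v \<le> f u)"
proof -
  have "Min (f ` S) \<in> f ` S"
    using assms(1,2) by simp
  then obtain v where v: "v \<in> S" "f v = Min (f ` S)"
    by auto
  then have min: "\<forall>u\<in>S. f v \<le> f u"
    using assms(1) by simp
  have "w = v" if "w \<in> S" "\<forall>u\<in>S. f w \<le> f u" for w
    using that min v(1) assms(3) by (meson antisym inj_onD)
  then show ?thesis
    using v(1) min by blast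
qed

lemma ex1_arg_max_inj_on:
  fixes f :: "'a \<Rightarrow> 'b::linorder"
  assumes "finite S" "S \<noteq> {}" "inj_on f S"
  shows "\<exists>!v. v \<in> S \<and> (\<forall>u\<in>S. f u \<le> f v)"
proof -
  have "Max (f ` S) \<in> f ` S"
    using assms(1,2) by simp
  then obtain v where v: "v \<in> S" "f v = Max (f ` S)"
    by auto
  then have max: "\<forall>u\<in>S. f u \<le> f v"
    using assms(1) by simp
  have "w = v" if "w \<in> S" "\<forall>u\<in>S. f u \<le> f w" for w
    using that max v(1) assms(3) by (meson antisym inj_onD)
  then show ?thesis
    using v(1) max by blast
qed

lemma distinct_if_sorted_wrt_irrefl:
  assumes "sorted_wrt R xs" "\<And>x. \<not> R x x"
  shows "distinct xs"
  using assms by (induction xs) auto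

lemma card_ge_if_meets_disjoint_family:
  assumes "finite D"
    and meets: "\<And>i. i < n \<Longrightarrow> D \<inter> C i \<noteq> {}"
    and disjoint: "\<And>i j. i < j \<Longrightarrow> j < n \<Longrightarrow> C i \<inter> C j = {}"
  shows "n \<le> card D"
proof -
  define f where "f i = (SOME u. u \<in> D \<inter> C i)" for i
  have f: "f i \<in> D \<inter> C i" if "i < n" for i
    unfolding f_def using someI_ex[of "\<lambda>u. u \<in> D \<inter> C i"] meets[OF that] by blast
  have "inj_on f {..<n}"
  proof (rule inj_onI)
    fix i j assume "i \<in> {..<n}" "j \<in> {..<n}" "f i = f j"
    then show "i = j"
      using f disjoint by (metis IntE disjoint_iff lessThan_iff linorder_neqE_nat)
  qed
  moreover have "f ` {..<n} \<subseteq> D"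
    using f by auto
  ultimately show ?thesis
    using card_inj_on_le[OF _ _ assms(1)] by fastforce
qed

lemma mem_CsetI:
  assumes "u \<in> V" "i < length ws" "r u \<le> r (ws ! i)"
    and "0 < i \<Longrightarrow> r (ws ! (i - 1)) < r u"
  shows "u \<in> Cset V r ws i"
  using assms unfolding Cset_def by auto

context
  fixes V :: "'a set" and r :: "'a \<Rightarrow> real" and ws :: "'a list"
  assumes sorted: "sorted_wrt (\<lambda>a b. r a < r b) ws"
begin

lemma Cset_disjoint:
  assumes "i < j" "j < length ws"
  shows "Cset V r ws i \<inter> Cset V r ws j = {}"
proof -
  have "length ws \<noteq> 1"
    using assms by auto
  then have "r v \<le> r (ws ! i)" if "v \<in> Cset V r ws i" for v
    using that assms unfolding Cset_def by (auto split: if_splits)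
  moreover have "r (ws ! (j - 1)) < r v" if "v \<in> Cset V r ws j" for v
    using that assms \<open>length ws \<noteq> 1\<close> unfolding Cset_def by (auto split: if_splits)
  moreover have "r (ws ! i) \<le> r (ws ! (j - 1))"
  proof (cases "i = j - 1")
    case False
    with assms have "i < j - 1" "j - 1 < length ws"
      by simp_all
    then show ?thesis
      using sorted_wrt_nth_less[OF sorted] by fastforce
  qed simp
  ultimately show ?thesis
    by force
qed

end

locale interval_representation =
  fixes V :: "'a set" and l r :: "'a \<Rightarrow> real"
  assumes finite_V: "finite V"
    and left_le_right: "\<And>v. v \<in> V \<Longrightarrow> l v \<le> r v"
    and inj_right: "inj_on r V"
begin

abbreviation N :: "'a \<Rightarrow> 'a set" where
  "N \<equiv> closed_nbhd V l r"

definition unlabeled :: "('a \<Rightarrow> nat) \<Rightarrow> 'a set" where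
  "unlabeled lab = {v \<in> V. lab v = 0}"

definition labeled2 :: "('a \<Rightarrow> nat) \<Rightarrow> 'a set" where
  "labeled2 lab = {v \<in> V. lab v = 2}"

definition relabel :: "('a \<Rightarrow> nat) \<Rightarrow> 'a \<Rightarrow> 'a \<Rightarrow> 'a \<Rightarrow> nat" where
  "relabel lab a b =
    (\<lambda>u. if u \<in> open_nbhd V l r b \<and> (lab(a := 1, b := 2)) u = 0 then 3
         else (lab(a := 1, b := 2)) u)"

definition labeled_dominated :: "('a \<Rightarrow> nat) \<Rightarrow> bool" where
  "labeled_dominated lab \<longleftrightarrow>
    (\<forall>v\<in>V. lab v \<noteq> 0 \<longrightarrow> lab v = 2 \<or> (\<exists>u\<in>labeled2 lab. adj l r u v))"

definition unlabeled_right_of_labeled2 :: "('a \<Rightarrow> nat) \<Rightarrow> bool" where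
  "unlabeled_right_of_labeled2 lab \<longleftrightarrow>
    (\<forall>v\<in>unlabeled lab. \<forall>b\<in>labeled2 lab. r b < l v)"

text \<open>
  The witness \<open>a\<close> is the 1-vertex of the round that labeled \<open>b\<close>; its closed neighbourhood lies
  in the class of \<open>b\<close>.
\<close>
definition labeled2_witnessed :: "('a \<Rightarrow> nat) \<Rightarrow> bool" where
  "labeled2_witnessed lab \<longleftrightarrow>
    (\<forall>b\<in>labeled2 lab. \<exists>a\<in>V. b \<in> N a \<and>
      (\<forall>u\<in>N a. r u \<le> r b \<and> (\<forall>b'\<in>labeled2 lab. r b' < r b \<longrightarrow> r b' < r u)))"

definition labeling_invariant :: "('a \<Rightarrow> nat) \<Rightarrow> bool" where
  "labeling_invariant lab \<longleftrightarrow> labeled_dominated lab \<and> unlabeled_right_of_labeled2 lab \<and>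
     labeled2_witnessed lab"

lemma label_step_unlabeled_empty:
  "unlabeled lab = {} \<Longrightarrow> label_step V l r lab = lab"
  unfolding label_step_def Let_def unlabeled_def[symmetric] by simp

lemma label_step_eq_relabel:
  assumes "unlabeled lab \<noteq> {}"
  obtains a b where "a \<in> unlabeled lab" "\<forall>u\<in>unlabeled lab. r a \<le> r u"
    "b \<in> N a" "\<forall>u\<in>N a. r u \<le> r b" "label_step V l r lab = relabel lab a b"
proof -
  define a where "a = (THE v. v \<in> unlabeled lab \<and> (\<forall>u\<in>unlabeled lab. r v \<le> r u))"
  have U: "finite (unlabeled lab)" "unlabeled lab \<subseteq> V"
    using finite_V by (auto simp: unlabeled_def)
  have a: "a \<in> unlabeled lab \<and> (\<forall>u\<in>unlabeled lab. r a \<le> r u)"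
    unfolding a_def
    by (rule theI') (rule ex1_arg_min_inj_on[OF U(1) assms inj_on_subset[OF inj_right U(2)]])
  have Na: "finite (N a)" "N a \<noteq> {}" "N a \<subseteq> V"
    using finite_V a U(2) by (auto simp: closed_nbhd_def)
  define b where "b = (THE v. v \<in> N a \<and> (\<forall>u\<in>N a. r u \<le> r v))"
  have b: "b \<in> N a \<and> (\<forall>u\<in>N a. r u \<le> r b)"
    unfolding b_def
    by (rule theI') (rule ex1_arg_max_inj_on[OF Na(1,2) inj_on_subset[OF inj_right Na(3)]])
  have "label_step V l r lab = relabel lab a b"
    using assms unfolding label_step_def relabel_def Let_def unlabeled_def[symmetric]
      a_def[symmetric] b_def[symmetric] by simp
  with a b that show ?thesis
    by blast
qed

end

locale labeling_round = interval_representation +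
  fixes lab :: "'a \<Rightarrow> nat" and a b :: 'a
  assumes a_unlabeled: "a \<in> unlabeled lab"
    and a_min: "\<And>u. u \<in> unlabeled lab \<Longrightarrow> r a \<le> r u"
    and b_nbhd: "b \<in> N a"
    and b_max: "\<And>u. u \<in> N a \<Longrightarrow> r u \<le> r b"
begin

lemma a_in_V: "a \<in> V" and b_in_V: "b \<in> V"
  using a_unlabeled b_nbhd by (auto simp: unlabeled_def closed_nbhd_def)

lemma b_eq_or_adj_a: "b = a \<or> adj l r b a"
  using b_nbhd by (auto simp: closed_nbhd_def)

lemma labeled2_relabel: "labeled2 (relabel lab a b) = insert b (labeled2 lab)"
  using a_unlabeled b_in_V by (auto simp: labeled2_def unlabeled_def relabel_def open_nbhd_def)

lemma unlabeled_relabel: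
  "unlabeled (relabel lab a b) = {v \<in> unlabeled lab. v \<noteq> a \<and> v \<noteq> b \<and> \<not> adj l r v b}"
  by (auto simp: unlabeled_def relabel_def open_nbhd_def)

lemma unlabeled_relabel_psubset: "unlabeled (relabel lab a b) \<subset> unlabeled lab"
  using a_unlabeled unlabeled_relabel by auto

lemma left_b_le_right_a: "l b \<le> r a"
  using b_eq_or_adj_a left_le_right a_in_V unfolding adj_def by auto

lemma labeled_dominated_relabel:
  assumes "labeled_dominated lab"
  shows "labeled_dominated (relabel lab a b)"
  unfolding labeled_dominated_def
proof (intro ballI impI)
  fix v assume v: "v \<in> V" "relabel lab a b v \<noteq> 0"
  have labeled2_iff: "relabel lab a b v = 2 \<longleftrightarrow> v \<in> insert b (labeled2 lab)"
    using v(1) labeled2_relabel unfolding labeled2_def by blast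
  show "relabel lab a b v = 2 \<or> (\<exists>u\<in>labeled2 (relabel lab a b). adj l r u v)"
  proof (cases "lab v = 0")
    case True
    then have "v \<in> unlabeled lab" "v \<notin> unlabeled (relabel lab a b)"
      using v by (simp_all add: unlabeled_def)
    then have "v = a \<or> v = b \<or> adj l r v b"
      using unlabeled_relabel by blast
    then have "v = b \<or> adj l r b v"
      using b_eq_or_adj_a unfolding adj_def by auto
    then show ?thesis
      using labeled2_iff labeled2_relabel by auto
  next
    case False
    then have "lab v = 2 \<or> (\<exists>u\<in>labeled2 lab. adj l r u v)"
      using assms v(1) unfolding labeled_dominated_def by blast
    then show ?thesis
      using labeled2_iff labeled2_relabel v(1) by (auto simp: labeled2_def)
  qed
qed

lemma unlabeled_right_of_labeled2_relabel:
  assumes "unlabeled_right_of_labeled2 lab"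
  shows "unlabeled_right_of_labeled2 (relabel lab a b)"
  unfolding unlabeled_right_of_labeled2_def
proof (intro ballI)
  fix v b' assume v: "v \<in> unlabeled (relabel lab a b)" and b': "b' \<in> labeled2 (relabel lab a b)"
  then have vU: "v \<in> unlabeled lab" and "v \<noteq> b" "\<not> adj l r v b"
    using unlabeled_relabel by auto
  moreover have "r a \<le> r v"
    using a_min vU by simp
  ultimately have "r b < l v"
    using left_b_le_right_a vU by (auto simp: adj_def unlabeled_def)
  then show "r b' < l v"
    using b' labeled2_relabel assms vU unfolding unlabeled_right_of_labeled2_def by auto
qed

lemma labeled2_witnessed_relabel:
  assumes "unlabeled_right_of_labeled2 lab" "labeled2_witnessed lab"
  shows "labeled2_witnessed (relabel lab a b)"
  unfolding labeled2_witnessed_def labeled2_relabel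
proof
  have old_left_of_a: "r b' < l a" if "b' \<in> labeled2 lab" for b'
    using assms(1) a_unlabeled that unfolding unlabeled_right_of_labeled2_def by blast
  have old_left_of_b: "r b' < r b" if "b' \<in> labeled2 lab" for b'
    using old_left_of_a[OF that] left_le_right[OF a_in_V] b_max[of a] a_in_V
    by (auto simp: closed_nbhd_def)
  fix b' assume "b' \<in> insert b (labeled2 lab)"
  then consider "b' = b" | "b' \<in> labeled2 lab" "b' \<noteq> b"
    by blast
  then show "\<exists>a\<in>V. b' \<in> N a \<and> (\<forall>u\<in>N a. r u \<le> r b' \<and>
    (\<forall>b''\<in>insert b (labeled2 lab). r b'' < r b' \<longrightarrow> r b'' < r u))"
  proof cases
    case 1
    have "r b'' < r u" if "u \<in> N a" "b'' \<in> labeled2 lab" for u b''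
    proof -
      have "l a \<le> r u"
        using that(1) left_le_right[OF a_in_V] unfolding closed_nbhd_def adj_def by auto
      then show ?thesis
        using old_left_of_a[OF that(2)] by simp
    qed
    then show ?thesis
      using 1 a_in_V b_nbhd b_max by blast
  next
    case 2
    then obtain a' where "a' \<in> V" "b' \<in> N a'"
      "\<forall>u\<in>N a'. r u \<le> r b' \<and> (\<forall>b''\<in>labeled2 lab. r b'' < r b' \<longrightarrow> r b'' < r u)"
      using assms(2) unfolding labeled2_witnessed_def by blast
    moreover have "\<not> r b < r b'"
      using old_left_of_b 2(1) by (meson less_asym)
    ultimately show ?thesis
      by blast
  qed
qed

lemma labeling_invariant_relabel:
  "labeling_invariant lab \<Longrightarrow> labeling_invariant (relabel lab a b)"
  unfolding labeling_invariant_def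
  using labeled_dominated_relabel unlabeled_right_of_labeled2_relabel labeled2_witnessed_relabel
  by blast

end

context interval_representation
begin

lemma labeling_invariant_iterate:
  assumes "t \<le> card V"
  shows "labeling_invariant ((label_step V l r ^^ t) (\<lambda>_. 0))
    \<and> card (unlabeled ((label_step V l r ^^ t) (\<lambda>_. 0))) \<le> card V - t"
  using assms
proof (induction t)
  case 0
  have "labeled2 (\<lambda>_. 0) = {}" "unlabeled (\<lambda>_. 0) = V"
    by (auto simp: labeled2_def unlabeled_def)
  then show ?case
    by (simp add: labeling_invariant_def labeled_dominated_def unlabeled_right_of_labeled2_def
        labeled2_witnessed_def)
next
  case (Suc t)
  define lab where "lab = (label_step V l r ^^ t) (\<lambda>_. 0)"
  have IH: "labeling_invariant lab" "card (unlabeled lab) \<le> card V - t"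
    using Suc by (auto simp: lab_def)
  have step: "(label_step V l r ^^ Suc t) (\<lambda>_. 0) = label_step V l r lab"
    by (simp add: lab_def)
  show ?case
  proof (cases "unlabeled lab = {}")
    case True
    then show ?thesis
      using IH step label_step_unlabeled_empty by simp
  next
    case False
    then obtain a b where ab: "a \<in> unlabeled lab" "\<forall>u\<in>unlabeled lab. r a \<le> r u"
      "b \<in> N a" "\<forall>u\<in>N a. r u \<le> r b" and eq: "label_step V l r lab = relabel lab a b"
      by (rule label_step_eq_relabel)
    have round: "labeling_round V l r lab a b"
      by (intro labeling_round.intro labeling_round_axioms.intro interval_representation_axioms)
        (use ab in auto)
    have "finite (unlabeled lab)"
      using finite_V by (auto simp: unlabeled_def)
    then have "card (unlabeled (relabel lab a b)) < card (unlabeled lab)"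
      using labeling_round.unlabeled_relabel_psubset[OF round] psubset_card_mono by blast
    then show ?thesis
      using labeling_round.labeling_invariant_relabel[OF round IH(1)] IH(2) step eq Suc.prems
      by simp
  qed
qed

lemma final_label_invariant:
  "labeling_invariant (final_label V l r)" "unlabeled (final_label V l r) = {}"
proof -
  have "finite (unlabeled (final_label V l r))"
    using finite_V by (auto simp: unlabeled_def)
  then show "labeling_invariant (final_label V l r)" "unlabeled (final_label V l r) = {}"
    using labeling_invariant_iterate[of "card V"] unfolding final_label_def by auto
qed

lemma labeled2_final_label: "labeled2 (final_label V l r) = V2 V l r"
  by (simp add: labeled2_def V2_def)

lemma V2_dominating: "dominating V l r (V2 V l r)"
  using final_label_invariant
  unfolding labeling_invariant_def labeled_dominated_def dominating_def labeled2_final_label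
  by (auto simp: V2_def unlabeled_def)

lemma V2_witnessed:
  assumes "b \<in> V2 V l r"
  obtains a where "a \<in> V" "\<And>u. u \<in> N a \<Longrightarrow> r u \<le> r b"
    "\<And>u b'. u \<in> N a \<Longrightarrow> b' \<in> V2 V l r \<Longrightarrow> r b' < r b \<Longrightarrow> r b' < r u"
  using final_label_invariant(1) assms
  unfolding labeling_invariant_def labeled2_witnessed_def labeled2_final_label by blast

lemma dominating_meets_Cset:
  assumes D: "dominating V l r D"
    and ws: "set ws = V2 V l r" "sorted_wrt (\<lambda>a b. r a < r b) ws"
    and i: "i < length ws"
  shows "D \<inter> Cset V r ws i \<noteq> {}"
proof -
  obtain a where a: "a \<in> V" "\<And>u. u \<in> N a \<Longrightarrow> r u \<le> r (ws ! i)"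
    "\<And>u b'. u \<in> N a \<Longrightarrow> b' \<in> V2 V l r \<Longrightarrow> r b' < r (ws ! i) \<Longrightarrow> r b' < r u"
    using V2_witnessed ws(1) nth_mem[OF i] by metis
  obtain u where u: "u \<in> D" "u \<in> N a"
    using D a(1) unfolding dominating_def closed_nbhd_def by blast
  have "u \<in> V"
    using u(2) by (simp add: closed_nbhd_def)
  moreover have "r (ws ! (i - 1)) < r u" if "0 < i"
    using a(3)[OF u(2)] sorted_wrt_nth_less[OF ws(2), of "i - 1" i] nth_mem[of "i - 1" ws]
      ws(1) that i by simp
  ultimately have "u \<in> Cset V r ws i"
    using mem_CsetI i a(2)[OF u(2)] by metis
  with u(1) show ?thesis
    by blast
qed

end

theorem lemma12:
  fixes V :: "'a set" and l r :: "'a \<Rightarrow> real" and ws :: "'a list"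
  assumes "finite V"
    and "\<forall>v\<in>V. l v \<le> r v"
    and "inj_on r V"
    and "connected_graph V l r"
    and "set ws = V2 V l r"
    and "sorted_wrt (\<lambda>a b. r a < r b) ws"
  shows "(\<forall>D. dominating V l r D \<longrightarrow> (\<forall>i < length ws. card (D \<inter> Cset V r ws i) \<ge> 1))
         \<and> min_dominating V l r (V2 V l r)"
proof -
  interpret interval_representation V l r
    using assms(1-3) by unfold_locales auto
  have finite_dom: "finite D" if "dominating V l r D" for D
    using that assms(1) finite_subset unfolding dominating_def by blast
  have meets: "D \<inter> Cset V r ws i \<noteq> {}" if "dominating V l r D" "i < length ws" for D i
    using dominating_meets_Cset that assms(5,6) by blast
  have "card (V2 V l r) = length ws"
    using distinct_card distinct_if_sorted_wrt_irrefl[OF assms(6)] assms(5) by fastforce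
  then have "card (V2 V l r) \<le> card D" if "dominating V l r D" for D
    using card_ge_if_meets_disjoint_family[OF finite_dom[OF that] meets[OF that]]
      Cset_disjoint[OF assms(6)] by simp
  moreover have "card (D \<inter> Cset V r ws i) \<ge> 1" if "dominating V l r D" "i < length ws" for D i
    using meets[OF that] finite_dom[OF that(1)] by (simp add: Suc_le_eq card_gt_0_iff)
  ultimately show ?thesis
    using V2_dominating unfolding min_dominating_def by blast
qed

end
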